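(* Consider the generic SURQT model (6) described in the context, and let $(\mathbf{R}(t),\mathbf{T}(t))$ be any solution with initial value in $\Omega$. Then for every $i=1,\dots,N$, \[ \limsup_{t\to\infty}R_i(t)\le \frac{f_i^T(\mathbf{1})}{f_i^T(\mathbf{1})+\theta_i},\qquad \liminf_{t\to\infty}T_i(t)\ge \frac{\theta_i\delta_i}{\left[f_i^T(\mathbf{1})+\theta_i\right]\left[f_i^T(\mathbf{1})+\delta_i\right]}, \] where $\mathbf{1}=(1,\dots,1)$.
   Context: $V=\{1,\dots,N\}$; $G_R=(V,E_R)$ and $G_T=(V,E_T)$ are strongly connected directed graphs. $\theta_i>0,\delta_i>0$ for all $i$; $\mathbf{D}_\theta=\mathrm{diag}(\theta_i)$, $\mathbf{D}_\delta=\mathrm{diag}(\delta_i)$. The functions $f_i^T,g_i^R:\mathbb{R}^N\to\mathbb{R}$ ($i=1,\dots,N$) satisfy: (C1) $f_i^T(x_1,\dots,x_N)$ depends on $x_j$ iff $(i,j)\in E_R$, and $g_i^R$ depends on $x_j$ iff $(i,j)\in E_T$; (C2) $f_i^T(\mathbf 0)=g_i^R(\mathbf 0)=0$; (C3) they are twice continuously differentiable; (C4) each is strictly increasing in each of its arguments; (C5) each is concave. The generic SURQT model (6) is the system, for $t\ge0$, $i=1,\dots,N$, \[ \frac{dR_i}{dt}=T_i f_i^T(\mathbf{R})-R_i g_i^R(\mathbf{T})-\theta_iR_i,\qquad \frac{dT_i}{dt}=R_i g_i^R(\mathbf{T})-T_i f_i^T(\mathbf{R})+\delta_i(1-R_i-T_i),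 \] with $\mathbf{R}=(R_1,\dots,R_N)$, $\mathbf{T}=(T_1,\dots,T_N)$, and initial state in $\Omega=\{(x_1,\dots,x_{2N})\in\mathbb{R}_+^{2N}: x_i+x_{N+i}\le1,\ 1\le i\le N\}$ (which is positively invariant). *)

theory Defs
  imports "HOL-Analysis.Analysis"
begin

definition strongly_connected :: "('n \<times> 'n) set \<Rightarrow> bool" where
  "strongly_connected E \<longleftrightarrow> (\<forall>i j. (i, j) \<in> E\<^sup>*)"

definition depends_on :: "((real^'n) \<Rightarrow> real) \<Rightarrow> 'n \<Rightarrow> bool" where
  "depends_on h j \<longleftrightarrow> (\<exists>x y. (\<forall>k. k \<noteq> j \<longrightarrow> x $ k = y $ k) \<and> h x \<noteq> h y)"

definition strictly_incr_in :: "((real^'n) \<Rightarrow> real) \<Rightarrow> 'n \<Rightarrow> bool" where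
  "strictly_incr_in h j \<longleftrightarrow>
     (\<forall>x y. (\<forall>k. k \<noteq> j \<longrightarrow> x $ k = y $ k) \<and> x $ j < y $ j \<longrightarrow> h x < h y)"

definition C2 :: "((real^'n) \<Rightarrow> real) \<Rightarrow> bool" where
  "C2 h \<longleftrightarrow> (\<exists>(D1 :: (real^'n) \<Rightarrow> ((real^'n) \<Rightarrow>\<^sub>L real))
                 (D2 :: (real^'n) \<Rightarrow> ((real^'n) \<Rightarrow>\<^sub>L ((real^'n) \<Rightarrow>\<^sub>L real))).
      (\<forall>x. (h has_derivative blinfun_apply (D1 x)) (at x)) \<and>
      (\<forall>x. (D1 has_derivative blinfun_apply (D2 x)) (at x)) \<and>
      continuous_on UNIV D2)"

text \<open>Conditions (C1)-(C5) for the infection functions f_i^T (graph E_R) and g_i^R (graph E_T).\<close>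
definition admissible_fun :: "('n \<times> 'n) set \<Rightarrow> ('n \<Rightarrow> (real^'n) \<Rightarrow> real) \<Rightarrow> bool" where
  "admissible_fun E F \<longleftrightarrow>
     (\<forall>i j. depends_on (F i) j \<longleftrightarrow> (i, j) \<in> E) \<and>
     (\<forall>i. F i 0 = 0) \<and>
     (\<forall>i. C2 (F i)) \<and>
     (\<forall>i j. (i, j) \<in> E \<longrightarrow> strictly_incr_in (F i) j) \<and>
     (\<forall>i. concave_on UNIV (F i))"

definition SURQT_solution ::
  "('n \<Rightarrow> (real^'n) \<Rightarrow> real) \<Rightarrow> ('n \<Rightarrow> (real^'n) \<Rightarrow> real) \<Rightarrow> ('n \<Rightarrow> real) \<Rightarrow> ('n \<Rightarrow> real)
    \<Rightarrow> (real \<Rightarrow> (real^'n)) \<Rightarrow> (real \<Rightarrow> (real^'n)) \<Rightarrow> bool" where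
  "SURQT_solution f g \<theta> \<delta> R T \<longleftrightarrow>
     (\<forall>t\<ge>0. \<forall>i.
        ((\<lambda>s. R s $ i) has_real_derivative
            (T t $ i * f i (R t) - R t $ i * g i (T t) - \<theta> i * R t $ i)) (at t within {0..}) \<and>
        ((\<lambda>s. T s $ i) has_real_derivative
            (R t $ i * g i (T t) - T t $ i * f i (R t) + \<delta> i * (1 - R t $ i - T t $ i))) (at t within {0..}))"

definition Omega :: "((real^'n) \<times> (real^'n)) set" where
  "Omega = {(r, s). \<forall>i. 0 \<le> r $ i \<and> 0 \<le> s $ i \<and> r $ i + s $ i \<le> 1}"

end

theory Submission
  imports Defs "HOL-Real_Asymp.Real_Asymp"
begin

(* On Omega, monotonicity gives g_i^R(T) >= 0 and f_i^T(R) <= F := f_i^T(1), hence the linear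
   differential inequalities R_i' <= F - (F + theta_i) R_i and, as soon as R_i <= a + eta with
   a = F / (F + theta_i), T_i' >= delta_i (1 - a - eta) - (F + delta_i) T_i; comparison with the
   corresponding linear equations yields both bounds.
   Positive invariance of Omega is proved along the way: the squared distance of
   (R_i, T_i, 1 - R_i - T_i)_i to the nonnegative orthant satisfies a Gronwall inequality, because
   concavity and f_i^T(0) = 0 bound f_i^T and g_i^R from below linearly in the negative parts. *)

definition neg_part :: "real \<Rightarrow> real" where
  "neg_part a = max (- a) 0"

lemma neg_part_nonneg: "0 \<le> neg_part a"
  by (simp add: neg_part_def)

lemma neg_part_ge: "- neg_part a \<le> a"
  by (simp add: neg_part_def)

lemma neg_part_le_abs: "neg_part a \<le> \<bar>a\<bar>"
  by (simp add: neg_part_def)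

lemma has_real_derivative_neg_part_sq:
  "((\<lambda>y. (neg_part y)\<^sup>2) has_real_derivative - 2 * neg_part a) (at a)"
proof -
  consider "a < 0" | "0 < a" | "a = 0" by linarith
  then show ?thesis
  proof cases
    case 1
    have "((\<lambda>y. y\<^sup>2) has_real_derivative - 2 * neg_part a) (at a)"
      using 1 by (auto intro!: derivative_eq_intros simp: neg_part_def)
    then show ?thesis
      by (rule has_field_derivative_transform_within_open[where S = "{..<0}"])
         (use 1 in \<open>auto simp: neg_part_def\<close>)
  next
    case 2
    have "((\<lambda>y. 0) has_real_derivative - 2 * neg_part a) (at a)"
      using 2 by (simp add: neg_part_def)
    then show ?thesis
      by (rule has_field_derivative_transform_within_open[where S = "{0<..}"])
         (use 2 in \<open>auto simp: neg_part_def\<close>)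
  next
    case 3
    have quotient_bound: "\<bar>(neg_part y)\<^sup>2 / y\<bar> \<le> \<bar>y\<bar>" for y
      by (cases "y < 0") (auto simp: neg_part_def power2_eq_square abs_mult)
    have "((\<lambda>y. (neg_part y)\<^sup>2 / y) \<longlongrightarrow> 0) (at 0)"
      by (rule Lim_null_comparison[where g = abs])
         (use quotient_bound in \<open>auto intro!: tendsto_rabs_zero tendsto_ident_at\<close>)
    then show ?thesis
      using 3 by (simp add: has_field_derivative_iff neg_part_def)
  qed
qed

lemma DERIV_within_nonpos_imp_decreasing:
  fixes f f' :: "real \<Rightarrow> real"
  assumes "a \<le> b"
    and deriv: "\<And>x. x \<in> {a..b} \<Longrightarrow> (f has_real_derivative f' x) (at x within {a..b})"
    and nonpos: "\<And>x. x \<in> {a..b} \<Longrightarrow> f' x \<le> 0"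
  shows "f b \<le> f a"
proof (rule DERIV_nonpos_imp_decreasing_open[OF \<open>a \<le> b\<close>])
  fix x assume x: "a < x" "x < b"
  then have "(f has_real_derivative f' x) (at x)"
    using deriv[of x] at_within_interior[of x "{a..b}"] by auto
  with nonpos[of x] x show "\<exists>y. (f has_real_derivative y) (at x) \<and> y \<le> 0" by auto
next
  show "continuous_on {a..b} f"
    unfolding continuous_on_eq_continuous_within
    using deriv DERIV_continuous by blast
qed

text \<open>The exponential weight turns the differential inequality into monotonicity.\<close>
lemma linear_differential_inequality_upper:
  fixes x x' :: "real \<Rightarrow> real"
  assumes "c \<noteq> 0" "t0 \<le> t"
    and deriv: "\<And>s. s \<in> {t0..t} \<Longrightarrow> (x has_real_derivative x' s) (at s within {t0..t})"
    and ineq: "\<And>s. s \<in> {t0..t} \<Longrightarrow> x' s \<le> p - c * x s"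
  shows "x t \<le> p / c + (x t0 - p / c) * exp (- c * (t - t0))"
proof -
  define W where "W s = (x s - p / c) * exp (c * (s - t0))" for s
  have "W t \<le> W t0"
  proof (rule DERIV_within_nonpos_imp_decreasing[OF \<open>t0 \<le> t\<close>])
    fix s assume s: "s \<in> {t0..t}"
    show "(W has_real_derivative (x' s + c * x s - p) * exp (c * (s - t0))) (at s within {t0..t})"
      unfolding W_def using \<open>c \<noteq> 0\<close>
      by (auto intro!: derivative_eq_intros deriv[OF s] simp: algebra_simps)
    show "(x' s + c * x s - p) * exp (c * (s - t0)) \<le> 0"
      using ineq[OF s] by (simp add: mult_nonpos_nonneg)
  qed
  then have "(x t - p / c) * exp (c * (t - t0)) * exp (- c * (t - t0))
      \<le> (x t0 - p / c) * exp (- c * (t - t0))"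
    by (simp add: W_def)
  then show ?thesis
    by (simp add: mult.assoc flip: exp_add)
qed

lemma Limsup_le_of_linear_differential_inequality:
  fixes x x' :: "real \<Rightarrow> real"
  assumes "0 < c"
    and deriv: "\<And>s. a \<le> s \<Longrightarrow> (x has_real_derivative x' s) (at s within {a..})"
    and ineq: "\<And>s. a \<le> s \<Longrightarrow> x' s \<le> p - c * x s"
  shows "Limsup at_top (\<lambda>t. ereal (x t)) \<le> ereal (p / c)"
proof -
  define b where "b t = p / c + (x a - p / c) * exp (- c * (t - a))" for t
  have "eventually (\<lambda>t. ereal (x t) \<le> ereal (b t)) at_top"
    using eventually_ge_at_top[of a]
  proof eventually_elim
    case (elim t)
    have "x t \<le> b t"
      unfolding b_def
      by (rule linear_differential_inequality_upper[where x' = x', OF _ elim])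
         (use \<open>0 < c\<close> ineq in \<open>auto intro: DERIV_subset[OF deriv]\<close>)
    then show ?case by simp
  qed
  then have "Limsup at_top (\<lambda>t. ereal (x t)) \<le> Limsup at_top (\<lambda>t. ereal (b t))"
    by (rule Limsup_mono)
  also have "\<dots> = ereal (p / c)"
    by (rule lim_imp_Limsup, simp, rule tendsto_ereal) (use \<open>0 < c\<close> in \<open>unfold b_def; real_asymp\<close>)
  finally show ?thesis .
qed

lemma Liminf_ge_of_linear_differential_inequality:
  fixes x x' :: "real \<Rightarrow> real"
  assumes "0 < c"
    and deriv: "\<And>s. a \<le> s \<Longrightarrow> (x has_real_derivative x' s) (at s within {a..})"
    and ineq: "\<And>s. a \<le> s \<Longrightarrow> p - c * x s \<le> x' s"
  shows "ereal (p / c) \<le> Liminf at_top (\<lambda>t. ereal (x t))"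
proof -
  have "Limsup at_top (\<lambda>t. ereal (- x t)) \<le> ereal ((- p) / c)"
  proof (rule Limsup_le_of_linear_differential_inequality[where x' = "\<lambda>s. - x' s", OF \<open>0 < c\<close>])
    fix s assume s: "a \<le> s"
    show "((\<lambda>s. - x s) has_real_derivative - x' s) (at s within {a..})"
      using deriv[OF s] by (rule DERIV_minus)
    show "- x' s \<le> - p - c * - x s"
      using ineq[OF s] by simp
  qed
  then show ?thesis
    using ereal_Limsup_uminus[of at_top "\<lambda>t. ereal (x t)"] by (simp add: ereal_uminus_le_reorder)
qed

text \<open>The derivative of \<open>\<Sum> neg_part\<^sup>2\<close> under quasi-positivity, estimated by Cauchy-Schwarz.\<close>
lemma sum_neg_part_sq_deriv_le:
  fixes x x' :: "'v \<Rightarrow> real"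
  assumes "0 \<le> C"
    and quasi_positive: "\<And>v. v \<in> I \<Longrightarrow> x v < 0 \<Longrightarrow> - C * (\<Sum>w\<in>I. neg_part (x w)) \<le> x' v"
  shows "(\<Sum>v\<in>I. - 2 * neg_part (x v) * x' v) \<le> 2 * C * card I * (\<Sum>v\<in>I. (neg_part (x v))\<^sup>2)"
proof -
  define N where "N = (\<Sum>w\<in>I. neg_part (x w))"
  have "0 \<le> N" unfolding N_def by (intro sum_nonneg neg_part_nonneg)
  have "(\<Sum>v\<in>I. - 2 * neg_part (x v) * x' v) \<le> (\<Sum>v\<in>I. 2 * C * N * neg_part (x v))"
  proof (rule sum_mono)
    fix v assume v: "v \<in> I"
    show "- 2 * neg_part (x v) * x' v \<le> 2 * C * N * neg_part (x v)"
    proof (cases "x v < 0")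
      case True
      then have "neg_part (x v) * (- C * N) \<le> neg_part (x v) * x' v"
        using quasi_positive[OF v] by (intro mult_left_mono neg_part_nonneg) (simp add: N_def)
      then show ?thesis by (simp add: algebra_simps)
    next
      case False
      with \<open>0 \<le> N\<close> \<open>0 \<le> C\<close> show ?thesis by (simp add: neg_part_def)
    qed
  qed
  also have "\<dots> = 2 * C * N\<^sup>2"
    by (simp add: N_def power2_eq_square sum_distrib_left sum_distrib_right mult.assoc)
  also have "\<dots> \<le> 2 * C * ((\<Sum>v\<in>I. (neg_part (x v))\<^sup>2) * card I)"
    using sum_squared_le_sum_of_squares[of "\<lambda>w. neg_part (x w)" I] \<open>0 \<le> C\<close>
    by (simp add: N_def mult_left_mono)
  finally show ?thesis by (simp add: algebra_simps)
qed

text \<open>The squared distance \<open>Q\<close> to the nonnegative orthant satisfies \<open>Q' \<le> K Q\<close> and vanishes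
  initially, hence vanishes throughout.\<close>
lemma nonneg_invariance:
  fixes x x' :: "'v \<Rightarrow> real \<Rightarrow> real"
  assumes "finite I" "0 \<le> C"
    and deriv: "\<And>v t. v \<in> I \<Longrightarrow> t \<in> {0..\<tau>} \<Longrightarrow> (x v has_real_derivative x' v t) (at t within {0..\<tau>})"
    and quasi_positive: "\<And>v t. v \<in> I \<Longrightarrow> t \<in> {0..\<tau>} \<Longrightarrow> x v t < 0 \<Longrightarrow>
        - C * (\<Sum>w\<in>I. neg_part (x w t)) \<le> x' v t"
    and init: "\<And>v. v \<in> I \<Longrightarrow> 0 \<le> x v 0"
    and "v \<in> I" "t \<in> {0..\<tau>}"
  shows "0 \<le> x v t"
proof -
  define Q where "Q t = (\<Sum>w\<in>I. (neg_part (x w t))\<^sup>2)" for t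
  define Q' where "Q' t = (\<Sum>w\<in>I. - 2 * neg_part (x w t) * x' w t)" for t
  define K where "K = 2 * C * real (card I)"
  have "0 \<le> K" using \<open>0 \<le> C\<close> by (simp add: K_def)
  have "Q 0 = 0"
    unfolding Q_def using init by (simp add: neg_part_def)
  have "Q t \<le> 0 / - (K + 1) + (Q 0 - 0 / - (K + 1)) * exp (- (- (K + 1)) * (t - 0))"
  proof (rule linear_differential_inequality_upper[where x' = Q'])
    show "- (K + 1) \<noteq> 0" using \<open>0 \<le> K\<close> by linarith
    fix s assume s: "s \<in> {0..t}"
    then have s': "s \<in> {0..\<tau>}" using \<open>t \<in> {0..\<tau>}\<close> by auto
    show "(Q has_real_derivative Q' s) (at s within {0..t})"
      unfolding Q_def Q'_def
      by (intro DERIV_sum DERIV_chain2[OF has_real_derivative_neg_part_sq]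
          DERIV_subset[OF deriv[OF _ s']]) (use \<open>t \<in> {0..\<tau>}\<close> in auto)
    have "Q' s \<le> K * Q s"
      unfolding Q_def Q'_def K_def
      by (rule sum_neg_part_sq_deriv_le[OF \<open>0 \<le> C\<close> quasi_positive[OF _ s']])
    moreover have "0 \<le> Q s" unfolding Q_def by (intro sum_nonneg) simp
    ultimately show "Q' s \<le> 0 - - (K + 1) * Q s" by (simp add: algebra_simps)
  qed (use \<open>t \<in> {0..\<tau>}\<close> in simp)
  with \<open>Q 0 = 0\<close> have "(\<Sum>w\<in>I. (neg_part (x w t))\<^sup>2) \<le> 0"
    by (simp add: Q_def)
  then have "neg_part (x v t) = 0"
    using sum_nonneg_eq_0_iff[OF \<open>finite I\<close>, of "\<lambda>w. (neg_part (x w t))\<^sup>2"] \<open>v \<in> I\<close>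
    by (simp add: order_antisym sum_nonneg)
  then show ?thesis by (simp add: neg_part_def)
qed

lemma admissible_fun_mono_coordinate:
  assumes adm: "admissible_fun E F"
    and same: "\<forall>k. k \<noteq> j \<longrightarrow> x $ k = y $ k" and le: "x $ j \<le> y $ j"
  shows "F i x \<le> F i y"
proof (cases "x $ j = y $ j")
  case True
  with same have "x = y" by (auto simp: vec_eq_iff)
  then show ?thesis by simp
next
  case False
  with le have lt: "x $ j < y $ j" by simp
  show ?thesis
  proof (cases "(i, j) \<in> E")
    case True
    with adm have "strictly_incr_in (F i) j" by (simp add: admissible_fun_def)
    with same lt show ?thesis unfolding strictly_incr_in_def by (meson less_imp_le)
  next
    case False
    with adm have "\<not> depends_on (F i) j" by (simp add: admissible_fun_def)
    with same have "F i x = F i y" unfolding depends_on_def by blast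
    then show ?thesis by simp
  qed
qed

lemma admissible_fun_mono:
  fixes x y :: "real^'n::finite"
  assumes adm: "admissible_fun E F" and le: "\<And>k. x $ k \<le> y $ k"
  shows "F i x \<le> F i y"
proof -
  have "F i x \<le> F i (\<chi> k. if k \<in> S then y $ k else x $ k)" if "finite S" for S
    using that
  proof (induction S rule: finite_induct)
    case empty
    then show ?case by simp
  next
    case (insert a S)
    have "F i (\<chi> k. if k \<in> S then y $ k else x $ k) \<le> F i (\<chi> k. if k \<in> insert a S then y $ k else x $ k)"
      by (rule admissible_fun_mono_coordinate[OF adm, where j = a]) (use insert le in auto)
    with insert show ?case by linarith
  qed
  from this[of UNIV] show ?thesis by simp
qed

lemma admissible_fun_continuous:
  assumes "admissible_fun E F"
  shows "continuous_on UNIV (F i)"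
proof -
  from assms obtain D where "\<And>x. (F i has_derivative blinfun_apply (D x)) (at x)"
    unfolding admissible_fun_def C2_def by blast
  then show ?thesis
    by (metis continuous_at_imp_continuous_on has_derivative_continuous)
qed

lemma admissible_fun_concave_lower_bound:
  fixes x :: "real^'n::finite"
  assumes adm: "admissible_fun E F" and "0 < M" "0 \<le> m" "m \<le> M"
    and ge: "\<And>j. - m \<le> x $ j"
  shows "m / M * F i (\<chi> j. - M) \<le> F i x"
proof -
  have "(\<chi> j. - m) = (1 - m / M) *\<^sub>R (0::real^'n) + (m / M) *\<^sub>R (\<chi> j. - M)"
    using \<open>0 < M\<close> by (simp add: vec_eq_iff)
  moreover have "(1 - m / M) * F i 0 + (m / M) * F i (\<chi> j. - M)
      \<le> F i ((1 - m / M) *\<^sub>R 0 + (m / M) *\<^sub>R (\<chi> j. - M))"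
    using adm assms(2-4) by (intro concave_onD) (auto simp: admissible_fun_def)
  moreover have "F i 0 = 0"
    using adm by (simp add: admissible_fun_def)
  moreover have "F i (\<chi> j. - m) \<le> F i x"
    by (rule admissible_fun_mono[OF adm]) (simp add: ge)
  ultimately show ?thesis by simp
qed

lemma admissible_fun_ge_neg_part:
  fixes F :: "'n::finite \<Rightarrow> (real^'n) \<Rightarrow> real"
  assumes adm: "admissible_fun E F" and "0 < M"
  shows "\<exists>L\<ge>0. \<forall>i x. (\<Sum>j\<in>UNIV. neg_part (x $ j)) \<le> M \<longrightarrow>
      - L * (\<Sum>j\<in>UNIV. neg_part (x $ j)) \<le> F i x"
proof (intro exI conjI allI impI)
  define L where "L = (\<Sum>i\<in>UNIV. - F i (\<chi> j. - M) / M)"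
  have slope_nonneg: "0 \<le> - F i (\<chi> j. - M) / M" for i
  proof -
    have "F i (\<chi> j. - M) \<le> F i 0" by (rule admissible_fun_mono[OF adm]) (use \<open>0 < M\<close> in simp)
    with adm \<open>0 < M\<close> show ?thesis by (simp add: admissible_fun_def divide_nonpos_pos)
  qed
  then show "0 \<le> L" unfolding L_def by (intro sum_nonneg)
  fix i and x :: "real^'n"
  define m where "m = (\<Sum>j\<in>UNIV. neg_part (x $ j))"
  assume "m \<le> M"
  have "0 \<le> m" unfolding m_def by (intro sum_nonneg neg_part_nonneg)
  have "- m \<le> x $ j" for j
    using member_le_sum[of j UNIV "\<lambda>j. neg_part (x $ j)"] neg_part_ge[of "x $ j"]
    by (simp add: m_def neg_part_nonneg)
  then have "m / M * F i (\<chi> j. - M) \<le> F i x"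
    by (rule admissible_fun_concave_lower_bound[OF adm \<open>0 < M\<close> \<open>0 \<le> m\<close> \<open>m \<le> M\<close>])
  moreover have "- L * m \<le> m / M * F i (\<chi> j. - M)"
  proof -
    have "- F i (\<chi> j. - M) / M \<le> L"
      unfolding L_def by (rule member_le_sum) (use slope_nonneg in auto)
    then have "m * (- F i (\<chi> j. - M) / M) \<le> m * L"
      using \<open>0 \<le> m\<close> by (rule mult_left_mono)
    then show ?thesis by (simp add: algebra_simps)
  qed
  ultimately show "- L * m \<le> F i x" by linarith
qed

lemma mult_ge_neg_part_bound:
  fixes a b B L N :: real
  assumes "\<bar>a\<bar> \<le> B" "\<bar>b\<bar> \<le> B" "0 \<le> L" "- L * N \<le> b" "neg_part a \<le> N"
  shows "- (B * L + B) * N \<le> a * b"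
proof -
  have "0 \<le> N" using neg_part_nonneg assms(5) by (rule order_trans)
  have "0 \<le> B" using assms(1) by linarith
  show ?thesis
  proof (cases "0 \<le> a")
    case True
    have "B * (- L * N) \<le> a * (- L * N)"
      using True assms(1,3) \<open>0 \<le> N\<close> by (intro mult_right_mono_neg) auto
    also have "\<dots> \<le> a * b"
      using True assms(4) by (rule mult_left_mono[rotated])
    finally show ?thesis
      using mult_nonneg_nonneg[OF \<open>0 \<le> B\<close> \<open>0 \<le> N\<close>] by (simp add: algebra_simps)
  next
    case False
    then have "neg_part a = - a" by (simp add: neg_part_def)
    have "\<bar>a * b\<bar> \<le> N * B"
      unfolding abs_mult using False assms \<open>neg_part a = - a\<close> by (intro mult_mono) auto
    moreover have "0 \<le> B * L * N" using \<open>0 \<le> B\<close> \<open>0 \<le> N\<close> \<open>0 \<le> L\<close> by simp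
    ultimately show ?thesis by (simp add: algebra_simps)
  qed
qed

text \<open>Here \<open>r, s, f, g\<close> stand for \<open>R\<^sub>i, T\<^sub>i, f\<^sub>i\<^sup>T(R), g\<^sub>i\<^sup>R(T)\<close>, and the three right-hand sides are
  those of (6) for \<open>R\<^sub>i\<close>, \<open>T\<^sub>i\<close> and \<open>1 - R\<^sub>i - T\<^sub>i\<close>.\<close>
lemma SURQT_rhs_quasi_positive:
  fixes r s f g \<theta> \<delta> B L N :: real
  assumes bounds: "\<bar>r\<bar> \<le> B" "\<bar>s\<bar> \<le> B" "\<bar>f\<bar> \<le> B" "\<bar>g\<bar> \<le> B" "\<theta> \<le> B" "\<delta> \<le> B"
    and "0 < \<theta>" "0 < \<delta>" "0 \<le> L" "- L * N \<le> f" "- L * N \<le> g"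
    and neg: "neg_part r \<le> N" "neg_part s \<le> N" "neg_part (1 - r - s) \<le> N"
  shows "r < 0 \<Longrightarrow> - (B * L + 3 * B) * N \<le> s * f - r * g - \<theta> * r"
    and "s < 0 \<Longrightarrow> - (B * L + 3 * B) * N \<le> r * g - s * f + \<delta> * (1 - r - s)"
    and "1 - r - s < 0 \<Longrightarrow> - (B * L + 3 * B) * N \<le> \<theta> * r - \<delta> * (1 - r - s)"
proof -
  have "0 \<le> N" using neg_part_nonneg neg(1) by (rule order_trans)
  have "0 \<le> B" using bounds(1) by linarith
  then have BN: "0 \<le> B * N" "0 \<le> B * L * N" using \<open>0 \<le> N\<close> \<open>0 \<le> L\<close> by simp_all
  have C_eq: "- (B * L + 3 * B) * N = - (B * L * N) - 3 * (B * N)"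
    and C'_eq: "- (B * L + B) * N = - (B * L * N) - B * N"
    by (simp_all add: algebra_simps)
  have sf: "- (B * L + B) * N \<le> s * f" and rg: "- (B * L + B) * N \<le> r * g"
    using mult_ge_neg_part_bound[OF bounds(2,3) \<open>0 \<le> L\<close> _ neg(2)]
      mult_ge_neg_part_bound[OF bounds(1,4) \<open>0 \<le> L\<close> _ neg(1)] assms(10,11) by auto
  have neg_mult: "- (B * N) \<le> neg_part a * c" if "neg_part a \<le> N" "- B \<le> c" for a c
  proof -
    have "N * - B \<le> neg_part a * - B"
      using that(1) \<open>0 \<le> B\<close> by (intro mult_right_mono_neg) auto
    also have "\<dots> \<le> neg_part a * c"
      using that(2) neg_part_nonneg by (rule mult_left_mono)
    finally show ?thesis by (simp add: mult.commute)
  qed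
  show "- (B * L + 3 * B) * N \<le> s * f - r * g - \<theta> * r" if "r < 0"
  proof -
    have "- (B * N) \<le> neg_part r * (g + \<theta>)"
      using neg(1) bounds(4) \<open>0 < \<theta>\<close> by (intro neg_mult) auto
    also have "\<dots> = - r * g - \<theta> * r"
      using that by (simp add: neg_part_def algebra_simps)
    finally show ?thesis using sf BN unfolding C_eq C'_eq by linarith
  qed
  show "- (B * L + 3 * B) * N \<le> r * g - s * f + \<delta> * (1 - r - s)" if "s < 0"
  proof -
    have "- (B * N) \<le> neg_part s * f"
      using neg(2) bounds(3) by (intro neg_mult) auto
    also have "\<dots> = - s * f"
      using that by (simp add: neg_part_def)
    finally have "- (B * N) \<le> - s * f" .
    moreover have "- (B * N) \<le> neg_part (1 - r - s) * - \<delta>"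
      using neg(3) bounds(6) by (intro neg_mult) auto
    moreover have "neg_part (1 - r - s) * - \<delta> \<le> \<delta> * (1 - r - s)"
      using mult_left_mono[OF neg_part_ge[of "1 - r - s"], of \<delta>] \<open>0 < \<delta>\<close> by (simp add: mult.commute)
    ultimately show ?thesis using rg BN unfolding C_eq C'_eq by linarith
  qed
  show "- (B * L + 3 * B) * N \<le> \<theta> * r - \<delta> * (1 - r - s)" if "1 - r - s < 0"
  proof -
    have "- (B * N) \<le> neg_part r * - \<theta>"
      using neg(1) bounds(5) by (intro neg_mult) auto
    moreover have "neg_part r * - \<theta> \<le> \<theta> * r"
      using mult_left_mono[OF neg_part_ge[of r], of \<theta>] \<open>0 < \<theta>\<close> by (simp add: mult.commute)
    moreover have "\<delta> * (1 - r - s) \<le> 0" using that \<open>0 < \<delta>\<close> by (simp add: mult_nonneg_nonpos)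
    ultimately show ?thesis using BN unfolding C_eq by linarith
  qed
qed

lemma sum3_exhaust [case_names Inl Inr_Inl Inr_Inr]:
  "(\<And>a. v = Inl a \<Longrightarrow> P) \<Longrightarrow> (\<And>b. v = Inr (Inl b) \<Longrightarrow> P) \<Longrightarrow> (\<And>c. v = Inr (Inr c) \<Longrightarrow> P) \<Longrightarrow> P"
  by (metis sum.exhaust)

locale SURQT_system =
  fixes E_R E_T :: "('n::finite \<times> 'n) set"
    and f g :: "'n \<Rightarrow> (real^'n) \<Rightarrow> real"
    and \<theta> \<delta> :: "'n \<Rightarrow> real"
    and R T :: "real \<Rightarrow> (real^'n)"
  assumes theta_pos: "\<And>i. 0 < \<theta> i" and delta_pos: "\<And>i. 0 < \<delta> i"
    and admissible_f: "admissible_fun E_R f" and admissible_g: "admissible_fun E_T g"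
    and solution: "SURQT_solution f g \<theta> \<delta> R T"
    and initial: "(R 0, T 0) \<in> Omega"
begin

lemma has_real_derivative_R:
  "0 \<le> t \<Longrightarrow> ((\<lambda>s. R s $ i) has_real_derivative
      T t $ i * f i (R t) - R t $ i * g i (T t) - \<theta> i * R t $ i) (at t within {0..})"
  using solution by (simp add: SURQT_solution_def)

lemma has_real_derivative_T:
  "0 \<le> t \<Longrightarrow> ((\<lambda>s. T s $ i) has_real_derivative
      R t $ i * g i (T t) - T t $ i * f i (R t) + \<delta> i * (1 - R t $ i - T t $ i)) (at t within {0..})"
  using solution by (simp add: SURQT_solution_def)

lemma continuous_on_R: "continuous_on {0..} R"
  and continuous_on_T: "continuous_on {0..} T"
proof -
  have "continuous_on {0..} (\<lambda>s. R s $ i)" "continuous_on {0..} (\<lambda>s. T s $ i)" for i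
    unfolding continuous_on_eq_continuous_within
    using DERIV_continuous[OF has_real_derivative_R] DERIV_continuous[OF has_real_derivative_T]
    by auto
  from continuous_on_vec_lambda[of _ "\<lambda>i s. R s $ i", OF this(1)]
    continuous_on_vec_lambda[of _ "\<lambda>i s. T s $ i", OF this(2)]
  show "continuous_on {0..} R" "continuous_on {0..} T" by simp_all
qed

lemma bounded_on_interval:
  "\<exists>B>0. \<forall>s\<in>{0..\<tau>}. \<forall>i j. \<bar>R s $ j\<bar> \<le> B \<and> \<bar>T s $ j\<bar> \<le> B \<and> \<bar>f i (R s)\<bar> \<le> B \<and>
      \<bar>g i (T s)\<bar> \<le> B \<and> \<theta> i \<le> B \<and> \<delta> i \<le> B"
proof -
  define \<Phi> where "\<Phi> s = norm (R s) + norm (T s) + norm (\<chi> i. f i (R s)) + norm (\<chi> i. g i (T s))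
      + (\<Sum>i\<in>UNIV. \<theta> i + \<delta> i)" for s
  have cont_R: "continuous_on {0..\<tau>} R" and cont_T: "continuous_on {0..\<tau>} T"
    by (auto intro: continuous_on_subset[OF continuous_on_R] continuous_on_subset[OF continuous_on_T])
  have "continuous_on {0..\<tau>} \<Phi>"
    unfolding \<Phi>_def
    by (intro continuous_intros cont_R cont_T
        continuous_on_compose2[OF admissible_fun_continuous[OF admissible_f] cont_R]
        continuous_on_compose2[OF admissible_fun_continuous[OF admissible_g] cont_T]) auto
  then have "bounded (\<Phi> ` {0..\<tau>})"
    by (intro compact_imp_bounded compact_continuous_image) auto
  then obtain B where B: "0 < B" "\<And>s. s \<in> {0..\<tau>} \<Longrightarrow> \<bar>\<Phi> s\<bar> \<le> B"
    unfolding bounded_pos by auto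
  show ?thesis
  proof (intro exI[of _ B] conjI[OF \<open>0 < B\<close>] ballI allI)
    fix s i j assume "s \<in> {0..\<tau>}"
    have "\<theta> i + \<delta> i \<le> (\<Sum>i\<in>UNIV. \<theta> i + \<delta> i)"
      by (rule member_le_sum) (auto intro: add_nonneg_nonneg less_imp_le theta_pos delta_pos)
    moreover have "\<bar>R s $ j\<bar> \<le> norm (R s)" "\<bar>T s $ j\<bar> \<le> norm (T s)"
      "\<bar>f i (R s)\<bar> \<le> norm (\<chi> i. f i (R s))" "\<bar>g i (T s)\<bar> \<le> norm (\<chi> i. g i (T s))"
      using component_le_norm_cart[of "R s" j] component_le_norm_cart[of "T s" j]
        component_le_norm_cart[of "\<chi> i. f i (R s)" i] component_le_norm_cart[of "\<chi> i. g i (T s)" i]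
      by simp_all
    ultimately show "\<bar>R s $ j\<bar> \<le> B \<and> \<bar>T s $ j\<bar> \<le> B \<and> \<bar>f i (R s)\<bar> \<le> B \<and>
        \<bar>g i (T s)\<bar> \<le> B \<and> \<theta> i \<le> B \<and> \<delta> i \<le> B"
      using B(2)[OF \<open>s \<in> {0..\<tau>}\<close>] theta_pos[of i] delta_pos[of i]
        norm_ge_zero[of "R s"] norm_ge_zero[of "T s"] norm_ge_zero[of "\<chi> i. f i (R s)"]
        norm_ge_zero[of "\<chi> i. g i (T s)"]
      unfolding \<Phi>_def by linarith
  qed
qed

text \<open>The \<open>3N\<close> quantities whose nonnegativity defines \<open>Omega\<close>, and their right-hand sides in (6).\<close>
definition coord :: "'n + 'n + 'n \<Rightarrow> real \<Rightarrow> real" where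
  "coord v s = (case v of Inl i \<Rightarrow> R s $ i | Inr (Inl i) \<Rightarrow> T s $ i
      | Inr (Inr i) \<Rightarrow> 1 - R s $ i - T s $ i)"

definition coord_rhs :: "'n + 'n + 'n \<Rightarrow> real \<Rightarrow> real" where
  "coord_rhs v s = (case v of
      Inl i \<Rightarrow> T s $ i * f i (R s) - R s $ i * g i (T s) - \<theta> i * R s $ i
    | Inr (Inl i) \<Rightarrow> R s $ i * g i (T s) - T s $ i * f i (R s) + \<delta> i * (1 - R s $ i - T s $ i)
    | Inr (Inr i) \<Rightarrow> \<theta> i * R s $ i - \<delta> i * (1 - R s $ i - T s $ i))"

definition total_neg_part :: "real \<Rightarrow> real" where
  "total_neg_part s = (\<Sum>v\<in>UNIV. neg_part (coord v s))"

lemma coord_simps: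
  "coord (Inl i) = (\<lambda>s. R s $ i)" "coord (Inr (Inl i)) = (\<lambda>s. T s $ i)"
  "coord (Inr (Inr i)) = (\<lambda>s. 1 - R s $ i - T s $ i)"
  by (simp_all add: coord_def fun_eq_iff)

lemma has_real_derivative_coord:
  "0 \<le> s \<Longrightarrow> (coord v has_real_derivative coord_rhs v s) (at s within {0..})"
  using has_real_derivative_R[of s] has_real_derivative_T[of s]
  by (cases v rule: sum3_exhaust)
     (auto simp: coord_simps coord_rhs_def algebra_simps intro!: derivative_eq_intros)

lemma neg_part_coord_le: "neg_part (coord v s) \<le> total_neg_part s"
  unfolding total_neg_part_def by (rule member_le_sum) (auto intro: neg_part_nonneg)

lemma sum_neg_part_le_total:
  "(\<Sum>j\<in>UNIV. neg_part (R s $ j)) \<le> total_neg_part s"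
  "(\<Sum>j\<in>UNIV. neg_part (T s $ j)) \<le> total_neg_part s"
proof -
  have "(\<Sum>j\<in>UNIV. neg_part (coord (h j) s)) \<le> total_neg_part s" if "inj h" for h
  proof -
    have "(\<Sum>j\<in>UNIV. neg_part (coord (h j) s)) = (\<Sum>v\<in>range h. neg_part (coord v s))"
      using sum.reindex[OF that, of "\<lambda>v. neg_part (coord v s)"] by simp
    also have "\<dots> \<le> total_neg_part s"
      unfolding total_neg_part_def by (rule sum_mono2) (auto intro: neg_part_nonneg)
    finally show ?thesis .
  qed
  from this[of Inl] this[of "Inr \<circ> Inl"]
  show "(\<Sum>j\<in>UNIV. neg_part (R s $ j)) \<le> total_neg_part s"
    "(\<Sum>j\<in>UNIV. neg_part (T s $ j)) \<le> total_neg_part s"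
    by (simp_all add: coord_def inj_def)
qed

lemma rates_ge_total_neg_part:
  "\<exists>L\<ge>0. \<forall>s\<in>{0..\<tau>}. \<forall>i. - L * total_neg_part s \<le> f i (R s) \<and> - L * total_neg_part s \<le> g i (T s)"
proof -
  obtain B where "0 < B" and bound: "\<forall>s\<in>{0..\<tau>}. \<forall>i j. \<bar>R s $ j\<bar> \<le> B \<and> \<bar>T s $ j\<bar> \<le> B \<and>
      \<bar>f i (R s)\<bar> \<le> B \<and> \<bar>g i (T s)\<bar> \<le> B \<and> \<theta> i \<le> B \<and> \<delta> i \<le> B"
    using bounded_on_interval[of \<tau>] by (elim exE conjE)
  define M where "M = real CARD('n) * B"
  have "0 < M" using \<open>0 < B\<close> by (simp add: M_def)
  have neg_sum_le_M: "(\<Sum>j\<in>UNIV. neg_part (x $ j)) \<le> M" if "\<And>j. \<bar>x $ j\<bar> \<le> B" for x :: "real^'n"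
  proof -
    have "(\<Sum>j\<in>UNIV. neg_part (x $ j)) \<le> (\<Sum>j\<in>(UNIV :: 'n set). B)"
      by (rule sum_mono) (rule order_trans[OF neg_part_le_abs that])
    then show ?thesis by (simp add: M_def)
  qed
  obtain Lf where "0 \<le> Lf" and Lf: "\<forall>i x. (\<Sum>j\<in>UNIV. neg_part (x $ j)) \<le> M \<longrightarrow>
      - Lf * (\<Sum>j\<in>UNIV. neg_part (x $ j)) \<le> f i x"
    using admissible_fun_ge_neg_part[OF admissible_f \<open>0 < M\<close>] by (elim exE conjE)
  obtain Lg where "0 \<le> Lg" and Lg: "\<forall>i x. (\<Sum>j\<in>UNIV. neg_part (x $ j)) \<le> M \<longrightarrow>
      - Lg * (\<Sum>j\<in>UNIV. neg_part (x $ j)) \<le> g i x"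
    using admissible_fun_ge_neg_part[OF admissible_g \<open>0 < M\<close>] by (elim exE conjE)
  define L where "L = max Lf Lg"
  have weaken: "- L * total_neg_part s \<le> y"
    if "- L' * S \<le> y" "0 \<le> L'" "L' \<le> L" "0 \<le> S" "S \<le> total_neg_part s" for L' S y s
  proof -
    have "L' * S \<le> L * total_neg_part s" using that by (intro mult_mono) auto
    with that(1) show ?thesis by simp
  qed
  have "- L * total_neg_part s \<le> f i (R s) \<and> - L * total_neg_part s \<le> g i (T s)"
    if "s \<in> {0..\<tau>}" for s i
  proof
    have "\<bar>R s $ j\<bar> \<le> B" "\<bar>T s $ j\<bar> \<le> B" for j
      using bound that by auto
    then have f_bound: "- Lf * (\<Sum>j\<in>UNIV. neg_part (R s $ j)) \<le> f i (R s)"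
      and g_bound: "- Lg * (\<Sum>j\<in>UNIV. neg_part (T s $ j)) \<le> g i (T s)"
      by (intro Lf[rule_format] Lg[rule_format] neg_sum_le_M; simp)+
    show "- L * total_neg_part s \<le> f i (R s)"
      by (rule weaken[OF f_bound \<open>0 \<le> Lf\<close> _ _ sum_neg_part_le_total(1)])
         (auto simp: L_def intro: sum_nonneg neg_part_nonneg)
    show "- L * total_neg_part s \<le> g i (T s)"
      by (rule weaken[OF g_bound \<open>0 \<le> Lg\<close> _ _ sum_neg_part_le_total(2)])
         (auto simp: L_def intro: sum_nonneg neg_part_nonneg)
  qed
  moreover have "0 \<le> L" using \<open>0 \<le> Lf\<close> by (simp add: L_def)
  ultimately show ?thesis by blast
qed

lemma coord_rhs_quasi_positive:
  "\<exists>C\<ge>0. \<forall>s\<in>{0..\<tau>}. \<forall>v. coord v s < 0 \<longrightarrow> - C * total_neg_part s \<le> coord_rhs v s"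
proof -
  obtain B where "0 < B" and bound: "\<forall>s\<in>{0..\<tau>}. \<forall>i j. \<bar>R s $ j\<bar> \<le> B \<and> \<bar>T s $ j\<bar> \<le> B \<and>
      \<bar>f i (R s)\<bar> \<le> B \<and> \<bar>g i (T s)\<bar> \<le> B \<and> \<theta> i \<le> B \<and> \<delta> i \<le> B"
    using bounded_on_interval[of \<tau>] by (elim exE conjE)
  obtain L where "0 \<le> L" and rates: "\<forall>s\<in>{0..\<tau>}. \<forall>i. - L * total_neg_part s \<le> f i (R s) \<and>
      - L * total_neg_part s \<le> g i (T s)"
    using rates_ge_total_neg_part[of \<tau>] by (elim exE conjE)
  have "- (B * L + 3 * B) * total_neg_part s \<le> coord_rhs v s"
    if "s \<in> {0..\<tau>}" "coord v s < 0" for v s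
  proof -
    have bounds: "\<bar>R s $ i\<bar> \<le> B" "\<bar>T s $ i\<bar> \<le> B" "\<bar>f i (R s)\<bar> \<le> B" "\<bar>g i (T s)\<bar> \<le> B"
      "\<theta> i \<le> B" "\<delta> i \<le> B" for i
      using bound that(1) by auto
    have rates_s: "- L * total_neg_part s \<le> f i (R s)" "- L * total_neg_part s \<le> g i (T s)" for i
      using rates that(1) by auto
    have neg_i: "neg_part (R s $ i) \<le> total_neg_part s" "neg_part (T s $ i) \<le> total_neg_part s"
      "neg_part (1 - R s $ i - T s $ i) \<le> total_neg_part s" for i
      using neg_part_coord_le[of "Inl i" s] neg_part_coord_le[of "Inr (Inl i)" s]
        neg_part_coord_le[of "Inr (Inr i)" s]
      by (simp_all add: coord_def)
    show ?thesis
      using \<open>coord v s < 0\<close>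
        SURQT_rhs_quasi_positive[OF bounds theta_pos delta_pos \<open>0 \<le> L\<close> rates_s neg_i]
      by (cases v rule: sum3_exhaust) (simp_all add: coord_def coord_rhs_def)
  qed
  moreover have "0 \<le> B * L + 3 * B" using \<open>0 < B\<close> \<open>0 \<le> L\<close> by simp
  ultimately show ?thesis by blast
qed

text \<open>Positive invariance of \<open>Omega\<close> is not among the hypotheses of the theorem.\<close>
lemma Omega_invariant:
  assumes "0 \<le> t"
  shows "(R t, T t) \<in> Omega"
proof -
  obtain C where "0 \<le> C" and quasi_positive:
      "\<forall>s\<in>{0..t}. \<forall>v. coord v s < 0 \<longrightarrow> - C * total_neg_part s \<le> coord_rhs v s"
    using coord_rhs_quasi_positive[of t] by (elim exE conjE)
  have "0 \<le> R 0 $ i" "0 \<le> T 0 $ i" "0 \<le> 1 - R 0 $ i - T 0 $ i" for i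
    using initial by (auto simp: Omega_def dest: spec[of _ i])
  then have init: "0 \<le> coord v 0" for v
    by (cases v rule: sum3_exhaust) (simp_all add: coord_def)
  have coord_nonneg: "0 \<le> coord v t" for v
  proof (rule nonneg_invariance[where I = UNIV and x = coord and x' = coord_rhs, OF _ \<open>0 \<le> C\<close>])
    show "(coord v has_real_derivative coord_rhs v s) (at s within {0..t})" if "s \<in> {0..t}" for v s
      using has_real_derivative_coord[of s v] that by (auto intro: DERIV_subset)
    show "- C * (\<Sum>w\<in>UNIV. neg_part (coord w s)) \<le> coord_rhs v s"
      if "s \<in> {0..t}" "coord v s < 0" for v s
      using quasi_positive that unfolding total_neg_part_def by blast
  qed (use init \<open>0 \<le> t\<close> in auto)
  have "0 \<le> R t $ i" "0 \<le> T t $ i" "R t $ i + T t $ i \<le> 1" for i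
    using coord_nonneg[of "Inl i"] coord_nonneg[of "Inr (Inl i)"] coord_nonneg[of "Inr (Inr i)"]
    by (simp_all add: coord_def)
  then show ?thesis by (simp add: Omega_def)
qed

lemma R_T_bounds:
  assumes "0 \<le> t"
  shows "0 \<le> R t $ i" "0 \<le> T t $ i" "T t $ i \<le> 1 - R t $ i" "R t $ i \<le> 1"
  using Omega_invariant[OF assms] by (auto simp: Omega_def dest: spec[of _ i])

lemma f_le_f_ones: "0 \<le> t \<Longrightarrow> f i (R t) \<le> f i (\<chi> j. 1)"
  by (intro admissible_fun_mono[OF admissible_f]) (simp add: R_T_bounds)

lemma f_nonneg: "0 \<le> t \<Longrightarrow> 0 \<le> f i (R t)"
  using admissible_fun_mono[OF admissible_f, of 0 "R t" i] admissible_f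
  by (simp add: R_T_bounds admissible_fun_def)

lemma g_nonneg: "0 \<le> t \<Longrightarrow> 0 \<le> g i (T t)"
  using admissible_fun_mono[OF admissible_g, of 0 "T t" i] admissible_g
  by (simp add: R_T_bounds admissible_fun_def)

lemma f_ones_nonneg: "0 \<le> f i (\<chi> j. 1)"
  using admissible_fun_mono[OF admissible_f, of 0 "\<chi> j. 1" i] admissible_f
  by (simp add: admissible_fun_def)

lemma R_deriv_le:
  assumes "0 \<le> t"
  shows "T t $ i * f i (R t) - R t $ i * g i (T t) - \<theta> i * R t $ i
    \<le> f i (\<chi> j. 1) - (f i (\<chi> j. 1) + \<theta> i) * R t $ i"
proof -
  have "T t $ i * f i (R t) \<le> (1 - R t $ i) * f i (\<chi> j. 1)"
    using R_T_bounds[OF assms] f_le_f_ones[OF assms] f_nonneg[OF assms] by (intro mult_mono) auto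
  moreover have "0 \<le> R t $ i * g i (T t)"
    using R_T_bounds[OF assms] g_nonneg[OF assms] by simp
  ultimately show ?thesis by (simp add: algebra_simps)
qed

lemma Limsup_R_le: "Limsup at_top (\<lambda>t. ereal (R t $ i)) \<le> ereal (f i (\<chi> j. 1) / (f i (\<chi> j. 1) + \<theta> i))"
  by (rule Limsup_le_of_linear_differential_inequality[OF _ has_real_derivative_R R_deriv_le])
     (use f_ones_nonneg[of i] theta_pos[of i] in auto)

lemma T_deriv_ge:
  assumes "0 \<le> t" "R t $ i \<le> r"
  shows "\<delta> i * (1 - r) - (f i (\<chi> j. 1) + \<delta> i) * T t $ i
    \<le> R t $ i * g i (T t) - T t $ i * f i (R t) + \<delta> i * (1 - R t $ i - T t $ i)"
proof -
  have "T t $ i * f i (R t) \<le> T t $ i * f i (\<chi> j. 1)"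
    using R_T_bounds[OF assms(1)] f_le_f_ones[OF assms(1)] by (intro mult_left_mono) auto
  moreover have "0 \<le> R t $ i * g i (T t)"
    using R_T_bounds[OF assms(1)] g_nonneg[OF assms(1)] by simp
  moreover have "\<delta> i * R t $ i \<le> \<delta> i * r"
    using assms(2) delta_pos[of i] by simp
  ultimately show ?thesis by (simp add: algebra_simps)
qed

text \<open>Once \<open>R\<^sub>i \<le> a + \<eta>\<close>, where \<open>a\<close> is the bound on \<open>limsup R\<^sub>i\<close>, the inequality \<open>T_deriv_ge\<close>
  gives \<open>liminf T\<^sub>i \<ge> \<delta>\<^sub>i (1 - a - \<eta>) / (F + \<delta>\<^sub>i)\<close>; then let \<open>\<eta> \<rightarrow> 0\<close>.\<close>
lemma Liminf_T_ge:
  "ereal (\<theta> i * \<delta> i / ((f i (\<chi> j. 1) + \<theta> i) * (f i (\<chi> j. 1) + \<delta> i)))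
    \<le> Liminf at_top (\<lambda>t. ereal (T t $ i))"
proof (rule ereal_le_epsilon2)
  define F where "F = f i (\<chi> j. 1)"
  define a where "a = F / (F + \<theta> i)"
  have "0 \<le> F" unfolding F_def by (rule f_ones_nonneg)
  then have "0 < F + \<theta> i" "0 < F + \<delta> i" using theta_pos[of i] delta_pos[of i] by linarith+
  fix e :: real assume "0 < e"
  define \<eta> where "\<eta> = e * (F + \<delta> i) / \<delta> i"
  have "0 < \<eta>" unfolding \<eta>_def using \<open>0 < e\<close> \<open>0 < F + \<delta> i\<close> delta_pos[of i] by simp
  have "eventually (\<lambda>t. ereal (R t $ i) < ereal (a + \<eta>)) at_top"
    using \<open>0 < \<eta>\<close> unfolding a_def F_def
    by (intro Limsup_lessD le_less_trans[OF Limsup_R_le[of i]]) simp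
  then obtain t1 where t1: "\<And>t. t1 \<le> t \<Longrightarrow> R t $ i < a + \<eta>"
    unfolding eventually_at_top_linorder by auto
  define t0 where "t0 = max t1 0"
  have "ereal (\<delta> i * (1 - (a + \<eta>)) / (F + \<delta> i)) \<le> Liminf at_top (\<lambda>t. ereal (T t $ i))"
  proof (rule Liminf_ge_of_linear_differential_inequality[OF \<open>0 < F + \<delta> i\<close>, where a = t0])
    fix s assume "t0 \<le> s"
    then have "0 \<le> s" "R s $ i \<le> a + \<eta>" using t1[of s] by (auto simp: t0_def)
    then show "((\<lambda>s. T s $ i) has_real_derivative
        R s $ i * g i (T s) - T s $ i * f i (R s) + \<delta> i * (1 - R s $ i - T s $ i)) (at s within {t0..})"
      by (intro DERIV_subset[OF has_real_derivative_T]) (auto simp: t0_def)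
    show "\<delta> i * (1 - (a + \<eta>)) - (F + \<delta> i) * T s $ i
        \<le> R s $ i * g i (T s) - T s $ i * f i (R s) + \<delta> i * (1 - R s $ i - T s $ i)"
      unfolding F_def by (rule T_deriv_ge) fact+
  qed
  moreover have "\<delta> i * (1 - (a + \<eta>)) / (F + \<delta> i) = \<theta> i * \<delta> i / ((F + \<theta> i) * (F + \<delta> i)) - e"
  proof -
    have "1 - a = \<theta> i / (F + \<theta> i)"
      unfolding a_def using \<open>0 < F + \<theta> i\<close> by (simp add: field_simps)
    moreover have "\<delta> i * \<eta> / (F + \<delta> i) = e"
      unfolding \<eta>_def using \<open>0 < F + \<delta> i\<close> delta_pos[of i] by simp
    ultimately show ?thesis
      by (simp add: right_diff_distrib diff_divide_distrib flip: diff_diff_eq)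
  qed
  ultimately have "ereal (\<theta> i * \<delta> i / ((F + \<theta> i) * (F + \<delta> i)) - e) + ereal e
      \<le> Liminf at_top (\<lambda>t. ereal (T t $ i)) + ereal e"
    by (intro add_right_mono) simp
  then show "ereal (\<theta> i * \<delta> i / ((f i (\<chi> j. 1) + \<theta> i) * (f i (\<chi> j. 1) + \<delta> i)))
      \<le> Liminf at_top (\<lambda>t. ereal (T t $ i)) + ereal e"
    by (simp add: F_def)
qed

end

theorem theorem1:
  fixes E_R E_T :: "('n::finite \<times> 'n) set"
    and f g :: "'n \<Rightarrow> (real^'n) \<Rightarrow> real"
    and \<theta> \<delta> :: "'n \<Rightarrow> real"
    and R T :: "real \<Rightarrow> (real^'n)"
  assumes "strongly_connected E_R" and "strongly_connected E_T"
    and "\<forall>i. \<theta> i > 0" and "\<forall>i. \<delta> i > 0"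
    and "admissible_fun E_R f" and "admissible_fun E_T g"
    and "SURQT_solution f g \<theta> \<delta> R T"
    and "(R 0, T 0) \<in> Omega"
  shows "\<forall>i.
     Limsup at_top (\<lambda>t. ereal (R t $ i)) \<le> ereal (f i (\<chi> j. 1) / (f i (\<chi> j. 1) + \<theta> i)) \<and>
     Liminf at_top (\<lambda>t. ereal (T t $ i)) \<ge>
       ereal (\<theta> i * \<delta> i / ((f i (\<chi> j. 1) + \<theta> i) * (f i (\<chi> j. 1) + \<delta> i)))"
proof -
  interpret SURQT_system E_R E_T f g \<theta> \<delta> R T
    by unfold_locales (use assms(3-8) in auto)
  show ?thesis
    using Limsup_R_le Liminf_T_ge by blast
qed

end
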